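(* Let $\mathcal{W}$ be the weight space of an MLP with hidden dimensions $d_1,\dots,d_{L-1}$ and let $G=S_{d_1}\times\dots\times S_{d_{L-1}}$ act on $\mathcal{W}$ by the (orthonormal, linear) neuron-permutation action described in the context. Let $p(\boldsymbol{\omega})$ be a $G$-invariant prior density, and let the likelihood $p(\mathbf{Y}\mid\mathbf{X},\boldsymbol{\omega})$ of a dataset $(\mathbf{X},\mathbf{Y})$ be $G$-invariant in $\boldsymbol{\omega}$ (as holds when it depends on $\boldsymbol{\omega}$ only through the network outputs $\mathbf{f}^{\boldsymbol{\omega}}(\mathbf{x}_i)$). Let $q_\theta(\boldsymbol{\omega})$ be a variational density on $\mathcal{W}$, and define its symmetrization $q_\theta^G(\boldsymbol{\omega})=\frac{1}{|G|}\sum_{g\in G}q_\theta(g^{-1}\cdot\boldsymbol{\omega})$ and the ELBOs $$\mathcal{L}_{\mathrm{VI}}(\theta)=\mathbb{E}_{\boldsymbol{\omega}\sim q_\theta}\log p(\mathbf{Y}\mid\mathbf{X},\boldsymbol{\omega})-\mathrm{KL}(q_\theta\,\|\,p),\qquad \mathcal{L}^G_{\mathrm{VI}}(\theta)=\mathbb{E}_{\boldsymbol{\omega}\sim q^G_\theta}\log p(\mathbf{Y}\mid\mathbf{X},\boldsymbol{\omega})-\mathrm{KL}(q^G_\theta\,\|\,p).$$ Consider the joint distribution of $(g,\boldsymbol{\omega})\in G\times\mathcal{W}$ given by $q_\theta^G(g,\boldsymbol{\omega})=\frac{1}{|G|}q_\theta(g^{-1}\cdot\boldsymbol{\omega})$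 (so $g$ is uniform on $G$ and $\boldsymbol{\omega}\mid g$ has density $q_\theta(g^{-1}\cdot\boldsymbol{\omega})$), whose $\boldsymbol{\omega}$-marginal is $q^G_\theta$. Then (assuming all quantities involved are finite) $$\mathcal{L}^G_{\mathrm{VI}}(\theta)=\mathcal{L}_{\mathrm{VI}}(\theta)+H(q^G_\theta)-H(q_\theta)=\mathcal{L}_{\mathrm{VI}}(\theta)+I(g;\boldsymbol{\omega}),$$ where $H$ denotes differential entropy and $I(g;\boldsymbol{\omega})$ is the mutual information of $g$ and $\boldsymbol{\omega}$ under $q_\theta^G(g,\boldsymbol{\omega})$.
   Context: The MLP weight space is $\mathcal{W}=\bigoplus_{l=1}^L(\mathbb{R}^{d_l\times d_{l-1}}\oplus\mathbb{R}^{d_l})$ with $\boldsymbol{\omega}=(\mathbf{W}_1,\dots,\mathbf{W}_L,\mathbf{b}_1,\dots,\mathbf{b}_L)$ and Euclidean norm. For $g=(\tau_1,\dots,\tau_{L-1})\in G$ with permutation matrices $\mathbf{P}_{\tau_l}$, $g\cdot\boldsymbol{\omega}$ has $\mathbf{W}_1'=\mathbf{P}_{\tau_1}^\top\mathbf{W}_1$, $\mathbf{b}_1'=\mathbf{P}_{\tau_1}^\top\mathbf{b}_1$; $\mathbf{W}_l'=\mathbf{P}_{\tau_l}^\top\mathbf{W}_l\mathbf{P}_{\tau_{l-1}}$, $\mathbf{b}_l'=\mathbf{P}_{\tau_l}^\top\mathbf{b}_l$ for $2\le l\le L-1$; $\mathbf{W}_L'=\mathbf{W}_L\mathbf{P}_{\tau_{L-1}}$,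 $\mathbf{b}_L'=\mathbf{b}_L$. This is a linear norm-preserving action. A function or density $h$ on $\mathcal{W}$ is $G$-invariant if $h(g\cdot\boldsymbol{\omega})=h(\boldsymbol{\omega})$ for all $g\in G,\boldsymbol{\omega}\in\mathcal{W}$. All distributions have densities. *)

theory Defs
  imports "HOL-Probability.Probability" "HOL-Combinatorics.Permutations"
begin

text \<open>Coordinates of the MLP weight space: Wc l i j is the entry (i,j) of W_l,
  Bc l i is the entry i of b_l (all indices 0-based, layers 1..L).\<close>
datatype coord = Wc nat nat nat | Bc nat nat

definition mlp_coords :: "(nat \<Rightarrow> nat) \<Rightarrow> nat \<Rightarrow> coord set" where
  "mlp_coords d L =
     {Wc l i j | l i j. 1 \<le> l \<and> l \<le> L \<and> i < d l \<and> j < d (l - 1)} \<union>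
     {Bc l i | l i. 1 \<le> l \<and> l \<le> L \<and> i < d l}"

definition mlp_space :: "(nat \<Rightarrow> nat) \<Rightarrow> nat \<Rightarrow> (coord \<Rightarrow> real) measure" where
  "mlp_space d L = (\<Pi>\<^sub>M c\<in>mlp_coords d L. lborel)"

text \<open>The group G = S_{d_1} x ... x S_{d_{L-1}}: tau l is a permutation of {..<d l}
  for 1 <= l <= L-1, and tau l = id otherwise (so tau 0 = tau L = id).\<close>
definition perm_group :: "(nat \<Rightarrow> nat) \<Rightarrow> nat \<Rightarrow> (nat \<Rightarrow> nat \<Rightarrow> nat) set" where
  "perm_group d L = {\<tau>. (\<forall>l. (1 \<le> l \<and> l < L \<longrightarrow> \<tau> l permutes {..<d l}) \<and>
                              (\<not> (1 \<le> l \<and> l < L) \<longrightarrow> \<tau> l = id))}"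

definition perm_inv :: "(nat \<Rightarrow> nat \<Rightarrow> nat) \<Rightarrow> (nat \<Rightarrow> nat \<Rightarrow> nat)" where
  "perm_inv \<tau> = (\<lambda>l. inv (\<tau> l))"

text \<open>Neuron-permutation action, with (P_tau)_{k i} = [k = tau i]:
  W_l' = P_{tau_l}^T W_l P_{tau_{l-1}}, i.e. W_l'[i,j] = W_l[tau_l i, tau_{l-1} j];
  b_l'[i] = b_l[tau_l i] (with tau_0 = tau_L = id).\<close>
definition act :: "(nat \<Rightarrow> nat) \<Rightarrow> nat \<Rightarrow> (nat \<Rightarrow> nat \<Rightarrow> nat) \<Rightarrow> (coord \<Rightarrow> real) \<Rightarrow> (coord \<Rightarrow> real)" where
  "act d L \<tau> \<omega> = restrict (\<lambda>c. case c of
       Wc l i j \<Rightarrow> \<omega> (Wc l (\<tau> l i) (\<tau> (l - 1) j))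
     | Bc l i \<Rightarrow> \<omega> (Bc l (\<tau> l i))) (mlp_coords d L)"

definition G_invariant :: "(nat \<Rightarrow> nat) \<Rightarrow> nat \<Rightarrow> ((coord \<Rightarrow> real) \<Rightarrow> real) \<Rightarrow> bool" where
  "G_invariant d L h \<longleftrightarrow>
     (\<forall>\<tau>\<in>perm_group d L. \<forall>\<omega>\<in>space (mlp_space d L). h (act d L \<tau> \<omega>) = h \<omega>)"

definition sym_density :: "(nat \<Rightarrow> nat) \<Rightarrow> nat \<Rightarrow> ((coord \<Rightarrow> real) \<Rightarrow> real) \<Rightarrow> (coord \<Rightarrow> real) \<Rightarrow> real" where
  "sym_density d L q \<omega> =
     (1 / real (card (perm_group d L))) * (\<Sum>\<tau>\<in>perm_group d L. q (act d L (perm_inv \<tau>) \<omega>))"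

definition joint_density :: "(nat \<Rightarrow> nat) \<Rightarrow> nat \<Rightarrow> ((coord \<Rightarrow> real) \<Rightarrow> real) \<Rightarrow> (nat \<Rightarrow> nat \<Rightarrow> nat) \<Rightarrow> (coord \<Rightarrow> real) \<Rightarrow> real" where
  "joint_density d L q \<tau> \<omega> = q (act d L (perm_inv \<tau>) \<omega>) / real (card (perm_group d L))"

definition diff_entropy :: "'a measure \<Rightarrow> ('a \<Rightarrow> real) \<Rightarrow> real" where
  "diff_entropy M q = - (\<integral>x. q x * ln (q x) \<partial>M)"

definition KL_dens :: "'a measure \<Rightarrow> ('a \<Rightarrow> real) \<Rightarrow> ('a \<Rightarrow> real) \<Rightarrow> real" where
  "KL_dens M q p = (\<integral>x. q x * ln (q x / p x) \<partial>M)"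

definition ELBO :: "'a measure \<Rightarrow> ('a \<Rightarrow> real) \<Rightarrow> ('a \<Rightarrow> real) \<Rightarrow> ('a \<Rightarrow> real) \<Rightarrow> real" where
  "ELBO M lik p q = (\<integral>x. q x * ln (lik x) \<partial>M) - KL_dens M q p"

text \<open>Mutual information of (g, x) for a joint density j g x on a finite set A times M
  (counting measure on A); marginals computed from the joint density.\<close>
definition mutual_info_dens :: "'g set \<Rightarrow> 'a measure \<Rightarrow> ('g \<Rightarrow> 'a \<Rightarrow> real) \<Rightarrow> real" where
  "mutual_info_dens A M j =
     (\<Sum>g\<in>A. \<integral>x. j g x * ln (j g x / ((\<integral>y. j g y \<partial>M) * (\<Sum>h\<in>A. j h x))) \<partial>M)"

end

theory Submission
  imports Defs
begin

text \<open>Every g in G permutes the coordinates of the weight space, so g and g^{-1} preserve the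
  product Lebesgue measure. Hence the orbit average q^G integrates every G-invariant function
  exactly as q does, which identifies the likelihood and prior terms of the two ELBOs; only the
  entropy terms differ. For the joint density q(g^{-1} w)/|G| the marginal of g is uniform and
  the marginal of w is q^G, and each conditional q(g^{-1} w) has the entropy of q, so
  I(g; w) = H(q^G) - H(q).\<close>

lemma distr_PiM_permute_coordinates:
  fixes N :: "'b measure"
  assumes "sigma_finite_measure N" and "finite I" and t: "bij_betw t I I"
  shows "distr (\<Pi>\<^sub>M i\<in>I. N) (\<Pi>\<^sub>M i\<in>I. N) (\<lambda>\<omega>. \<lambda>i\<in>I. \<omega> (t i)) = (\<Pi>\<^sub>M i\<in>I. N)"
proof (rule product_sigma_finite.PiM_eqI[OF _ \<open>finite I\<close>])
  show "product_sigma_finite (\<lambda>_::'i. N)"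
    using assms(1) by (simp add: product_sigma_finite_def)
  show "sets (distr (\<Pi>\<^sub>M i\<in>I. N) (\<Pi>\<^sub>M i\<in>I. N) (\<lambda>\<omega>. \<lambda>i\<in>I. \<omega> (t i))) = sets (\<Pi>\<^sub>M i\<in>I. N)"
    by simp
  fix A assume A: "\<And>i. i \<in> I \<Longrightarrow> A i \<in> sets N"
  let ?P = "\<Pi>\<^sub>M i\<in>I. N" and ?T = "\<lambda>\<omega>. \<lambda>i\<in>I. \<omega> (t i)" and ?s = "the_inv_into I t"
  have tI: "t \<in> I \<rightarrow> I" using t by (auto simp: bij_betw_def)
  have s: "bij_betw ?s I I" using t by (rule bij_betw_the_inv_into)
  have "?T \<in> ?P \<rightarrow>\<^sub>M ?P"
    using tI by (intro measurable_restrict measurable_component_singleton) auto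
  moreover have "?T -` Pi\<^sub>E I A \<inter> space ?P = (\<Pi>\<^sub>E i\<in>I. A (?s i))"
  proof (intro set_eqI iffI)
    fix \<omega> assume "\<omega> \<in> ?T -` Pi\<^sub>E I A \<inter> space ?P"
    then have "\<omega> (t i) \<in> A i" if "i \<in> I" for i
      using that by (auto simp: PiE_iff)
    then have "\<omega> i \<in> A (?s i)" if "i \<in> I" for i
      using that s t by (metis bij_betwE f_the_inv_into_f_bij_betw)
    then show "\<omega> \<in> (\<Pi>\<^sub>E i\<in>I. A (?s i))"
      using \<open>\<omega> \<in> ?T -` Pi\<^sub>E I A \<inter> space ?P\<close> by (auto simp: space_PiM PiE_iff)
  next
    fix \<omega> assume \<omega>: "\<omega> \<in> (\<Pi>\<^sub>E i\<in>I. A (?s i))"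
    have "\<omega> (t i) \<in> A (?s (t i))" if "i \<in> I" for i
      using \<omega> that tI by (auto simp: PiE_iff)
    then have "\<omega> (t i) \<in> A i" if "i \<in> I" for i
      using that t by (simp add: bij_betw_def the_inv_into_f_f)
    then have "?T \<omega> \<in> Pi\<^sub>E I A" by simp
    moreover have "\<omega> i \<in> space N" if "i \<in> I" for i
      using \<omega> that A[of "?s i"] s sets.sets_into_space by (fastforce simp: PiE_iff bij_betwE)
    ultimately show "\<omega> \<in> ?T -` Pi\<^sub>E I A \<inter> space ?P"
      using \<omega> by (auto simp: space_PiM PiE_iff)
  qed
  ultimately have "emeasure (distr ?P ?P ?T) (Pi\<^sub>E I A) = emeasure ?P (\<Pi>\<^sub>E i\<in>I. A (?s i))"
    using A \<open>finite I\<close> by (simp add: emeasure_distr sets_PiM_I_finite)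
  also have "\<dots> = (\<Prod>i\<in>I. emeasure N (A (?s i)))"
    using A s \<open>finite I\<close> \<open>product_sigma_finite (\<lambda>_. N)\<close>
    by (intro product_sigma_finite.emeasure_PiM) (auto simp: bij_betwE)
  also have "\<dots> = (\<Prod>i\<in>I. emeasure N (A i))"
    using s by (rule prod.reindex_bij_betw)
  finally show "emeasure (distr ?P ?P ?T) (Pi\<^sub>E I A) = (\<Prod>i\<in>I. emeasure N (A i))" .
qed

context
  fixes M :: "'a measure" and p q :: "'a \<Rightarrow> real"
  assumes p: "p \<in> borel_measurable M" and q: "q \<in> borel_measurable M"
    and q_nonneg: "\<And>x. x \<in> space M \<Longrightarrow> 0 \<le> q x"
    and abs_cont: "AE x in M. 0 < q x \<longrightarrow> 0 < p x"
    and q_ln_q: "integrable M (\<lambda>x. q x * ln (q x))"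
    and q_ln_q_div_p: "integrable M (\<lambda>x. q x * ln (q x / p x))"
begin

lemma AE_mult_ln_div_eq: "AE x in M. q x * ln (q x / p x) = q x * ln (q x) - q x * ln (p x)"
  using abs_cont
proof (rule AE_mp[OF _ AE_I2])
  fix x assume "x \<in> space M"
  then show "(0 < q x \<longrightarrow> 0 < p x) \<longrightarrow> q x * ln (q x / p x) = q x * ln (q x) - q x * ln (p x)"
    using q_nonneg[of x] by (cases "q x = 0") (auto simp: ln_div algebra_simps)
qed

lemma integrable_mult_ln_density: "integrable M (\<lambda>x. q x * ln (p x))"
proof (rule integrable_cong_AE_imp)
  show "integrable M (\<lambda>x. q x * ln (q x) - q x * ln (q x / p x))"
    using q_ln_q q_ln_q_div_p by simp
  show "(\<lambda>x. q x * ln (p x)) \<in> borel_measurable M" using p q by measurable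
  show "AE x in M. q x * ln (q x) - q x * ln (q x / p x) = q x * ln (p x)"
    using AE_mult_ln_div_eq by eventually_elim simp
qed

lemma ELBO_eq_diff_entropy:
  "ELBO M lik p q = (\<integral>x. q x * ln (lik x) \<partial>M) + (\<integral>x. q x * ln (p x) \<partial>M) + diff_entropy M q"
proof -
  have "KL_dens M q p = (\<integral>x. q x * ln (q x) - q x * ln (p x) \<partial>M)"
    unfolding KL_dens_def
  proof (rule integral_cong_AE[OF _ _ AE_mult_ln_div_eq])
    show "(\<lambda>x. q x * ln (q x / p x)) \<in> borel_measurable M"
      and "(\<lambda>x. q x * ln (q x) - q x * ln (p x)) \<in> borel_measurable M"
      using p q by measurable
  qed
  also have "\<dots> = (\<integral>x. q x * ln (q x) \<partial>M) - (\<integral>x. q x * ln (p x) \<partial>M)"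
    using q_ln_q integrable_mult_ln_density by simp
  finally show ?thesis unfolding ELBO_def diff_entropy_def by simp
qed

end

lemma mult_ln_div_rescaled:
  fixes a s n :: real
  assumes "0 \<le> a" and "a \<le> n * s" and "0 < n"
  shows "a / n * ln (a / n / (1 / n * s)) = (a * ln a - a * ln s) / n"
proof (cases "a = 0")
  case False
  then have "0 < a" and "0 < n * s"
    using assms(1,2) by linarith+
  then have "0 < s"
    using assms(3) by (simp add: zero_less_mult_iff)
  moreover have "a / n / (1 / n * s) = a / s"
    using assms(3) by (simp add: field_simps)
  ultimately show ?thesis
    using \<open>0 < a\<close> by (simp add: ln_div diff_divide_distrib right_diff_distrib)
qed simp

locale finite_measure_preserving_family =
  fixes M :: "'a measure" and A :: "'g set" and T :: "'g \<Rightarrow> 'a \<Rightarrow> 'a"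
  assumes finite_family: "finite A"
    and family_nonempty: "A \<noteq> {}"
    and measurable_T: "g \<in> A \<Longrightarrow> T g \<in> M \<rightarrow>\<^sub>M M"
    and distr_T: "g \<in> A \<Longrightarrow> distr M M (T g) = M"
begin

definition symmetrization :: "('a \<Rightarrow> real) \<Rightarrow> 'a \<Rightarrow> real" where
  "symmetrization q x = (\<Sum>g\<in>A. q (T g x)) / real (card A)"

lemma card_family_pos: "0 < real (card A)"
  using finite_family family_nonempty by (simp add: card_gt_0_iff)

lemma integral_comp_T:
  fixes f :: "'a \<Rightarrow> real"
  assumes "g \<in> A" and "f \<in> borel_measurable M"
  shows "(\<integral>x. f (T g x) \<partial>M) = integral\<^sup>L M f"
  using integral_distr[OF measurable_T assms(2)] distr_T assms(1) by simp

lemma integrable_comp_T_iff: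
  fixes f :: "'a \<Rightarrow> real"
  assumes "g \<in> A" and "f \<in> borel_measurable M"
  shows "integrable M (\<lambda>x. f (T g x)) \<longleftrightarrow> integrable M f"
  using integrable_distr_eq[OF measurable_T assms(2)] distr_T assms(1) by simp

lemma AE_comp_T_iff:
  assumes "g \<in> A" and "{x \<in> space M. P x} \<in> sets M"
  shows "(AE x in M. P (T g x)) \<longleftrightarrow> (AE x in M. P x)"
  using AE_distr_iff[OF measurable_T[OF assms(1)] assms(2)] unfolding distr_T[OF assms(1)] by simp

lemma borel_measurable_symmetrization:
  assumes "q \<in> borel_measurable M"
  shows "symmetrization q \<in> borel_measurable M"
proof -
  have "(\<lambda>x. q (T g x)) \<in> borel_measurable M" if "g \<in> A" for g
    using measurable_compose[OF measurable_T[OF that] assms] .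
  then show ?thesis unfolding symmetrization_def[abs_def] by measurable
qed

lemma le_card_mult_symmetrization:
  assumes "g \<in> A" and "x \<in> space M" and "\<And>y. y \<in> space M \<Longrightarrow> 0 \<le> q y"
  shows "q (T g x) \<le> real (card A) * symmetrization q x"
proof -
  have "\<And>h. h \<in> A \<Longrightarrow> 0 \<le> q (T h x)"
    using assms(2,3) measurable_space[OF measurable_T] by blast
  then have "q (T g x) \<le> (\<Sum>h\<in>A. q (T h x))"
    using assms(1) finite_family by (intro member_le_sum) auto
  then show ?thesis using card_family_pos by (simp add: symmetrization_def)
qed

lemma symmetrization_nonneg:
  assumes "\<And>y. y \<in> space M \<Longrightarrow> 0 \<le> q y" and "x \<in> space M"
  shows "0 \<le> symmetrization q x"
  using assms measurable_space[OF measurable_T] by (simp add: symmetrization_def sum_nonneg)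

lemma integral_symmetrization_mult_invariant:
  fixes q h :: "'a \<Rightarrow> real"
  assumes q: "q \<in> borel_measurable M" and h: "h \<in> borel_measurable M"
    and h_inv: "\<And>g x. g \<in> A \<Longrightarrow> x \<in> space M \<Longrightarrow> h (T g x) = h x"
    and qh: "integrable M (\<lambda>x. q x * h x)"
  shows "(\<integral>x. symmetrization q x * h x \<partial>M) = (\<integral>x. q x * h x \<partial>M)"
proof -
  have qh_meas: "(\<lambda>x. q x * h x) \<in> borel_measurable M" using q h by measurable
  have int_g: "integrable M (\<lambda>x. q (T g x) * h x)"
    and integral_g: "(\<integral>x. q (T g x) * h x \<partial>M) = (\<integral>x. q x * h x \<partial>M)" if g: "g \<in> A" for g
  proof -
    have "integrable M (\<lambda>x. q (T g x) * h x) \<longleftrightarrow> integrable M (\<lambda>x. q (T g x) * h (T g x))"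
      by (rule Bochner_Integration.integrable_cong) (simp_all add: h_inv g)
    then show "integrable M (\<lambda>x. q (T g x) * h x)"
      using integrable_comp_T_iff[OF g qh_meas] qh by simp
    have "(\<integral>x. q (T g x) * h x \<partial>M) = (\<integral>x. q (T g x) * h (T g x) \<partial>M)"
      by (rule Bochner_Integration.integral_cong) (simp_all add: h_inv g)
    then show "(\<integral>x. q (T g x) * h x \<partial>M) = (\<integral>x. q x * h x \<partial>M)"
      using integral_comp_T[OF g qh_meas] by simp
  qed
  have sym_eq: "(\<lambda>x. symmetrization q x * h x) = (\<lambda>x. (\<Sum>g\<in>A. q (T g x) * h x) / real (card A))"
    by (simp add: symmetrization_def sum_distrib_right)
  show "(\<integral>x. symmetrization q x * h x \<partial>M) = (\<integral>x. q x * h x \<partial>M)"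
    unfolding sym_eq using int_g integral_g card_family_pos by (simp add: integral_sum)
qed

lemma AE_symmetrization_pos_imp:
  fixes p q :: "'a \<Rightarrow> real"
  assumes q: "q \<in> borel_measurable M" and p: "p \<in> borel_measurable M"
    and q_nonneg: "\<And>x. x \<in> space M \<Longrightarrow> 0 \<le> q x"
    and p_inv: "\<And>g x. g \<in> A \<Longrightarrow> x \<in> space M \<Longrightarrow> p (T g x) = p x"
    and supp: "AE x in M. 0 < q x \<longrightarrow> 0 < p x"
  shows "AE x in M. 0 < symmetrization q x \<longrightarrow> 0 < p x"
proof -
  have "{x \<in> space M. 0 < q x \<longrightarrow> 0 < p x} \<in> sets M" using q p by measurable
  then have "AE x in M. 0 < q (T g x) \<longrightarrow> 0 < p x" if g: "g \<in> A" for g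
  proof -
    have "AE x in M. 0 < q (T g x) \<longrightarrow> 0 < p (T g x)"
      using supp AE_comp_T_iff[OF g \<open>{x \<in> space M. 0 < q x \<longrightarrow> 0 < p x} \<in> sets M\<close>] by simp
    moreover have "AE x in M. p (T g x) = p x" using p_inv g by (intro AE_I2) simp
    ultimately show ?thesis by eventually_elim simp
  qed
  then have "AE x in M. \<forall>g\<in>A. 0 < q (T g x) \<longrightarrow> 0 < p x"
    by (rule AE_finite_allI[OF finite_family])
  moreover have "AE x in M. 0 < symmetrization q x \<longrightarrow> (\<exists>g\<in>A. 0 < q (T g x))"
  proof (intro AE_I2 impI; rule ccontr)
    fix x assume "0 < symmetrization q x" and "\<not> (\<exists>g\<in>A. 0 < q (T g x))"
    then have "0 < (\<Sum>g\<in>A. q (T g x))" and "(\<Sum>g\<in>A. q (T g x)) \<le> 0"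
      using card_family_pos
      by (simp_all add: symmetrization_def zero_less_divide_iff not_less sum_nonpos)
    then show False by simp
  qed
  ultimately show ?thesis by eventually_elim blast
qed

lemma ELBO_symmetrization:
  fixes lik p q :: "'a \<Rightarrow> real"
  assumes lik: "lik \<in> borel_measurable M" and p: "p \<in> borel_measurable M"
    and q: "q \<in> borel_measurable M" and q_nonneg: "\<And>x. x \<in> space M \<Longrightarrow> 0 \<le> q x"
    and lik_inv: "\<And>g x. g \<in> A \<Longrightarrow> x \<in> space M \<Longrightarrow> lik (T g x) = lik x"
    and p_inv: "\<And>g x. g \<in> A \<Longrightarrow> x \<in> space M \<Longrightarrow> p (T g x) = p x"
    and abs_cont: "AE x in M. 0 < q x \<longrightarrow> 0 < p x"
    and q_ln_lik: "integrable M (\<lambda>x. q x * ln (lik x))"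
    and q_ln_q: "integrable M (\<lambda>x. q x * ln (q x))"
    and q_ln_q_div_p: "integrable M (\<lambda>x. q x * ln (q x / p x))"
    and qS_ln_qS: "integrable M (\<lambda>x. symmetrization q x * ln (symmetrization q x))"
    and qS_ln_qS_div_p: "integrable M (\<lambda>x. symmetrization q x * ln (symmetrization q x / p x))"
  shows "ELBO M lik p (symmetrization q) =
    ELBO M lik p q + diff_entropy M (symmetrization q) - diff_entropy M q"
proof -
  have "(\<integral>x. symmetrization q x * ln (f x) \<partial>M) = (\<integral>x. q x * ln (f x) \<partial>M)"
    if "f \<in> borel_measurable M" and "\<And>g x. g \<in> A \<Longrightarrow> x \<in> space M \<Longrightarrow> f (T g x) = f x"
      and "integrable M (\<lambda>x. q x * ln (f x))" for f
    using that by (intro integral_symmetrization_mult_invariant[OF q]) simp_all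
  moreover have "integrable M (\<lambda>x. q x * ln (p x))"
    using p q q_nonneg abs_cont q_ln_q q_ln_q_div_p by (rule integrable_mult_ln_density)
  moreover have "AE x in M. 0 < symmetrization q x \<longrightarrow> 0 < p x"
    using q p q_nonneg p_inv abs_cont by (rule AE_symmetrization_pos_imp)
  ultimately show ?thesis
    using ELBO_eq_diff_entropy[OF p q q_nonneg abs_cont q_ln_q q_ln_q_div_p]
      ELBO_eq_diff_entropy[OF p borel_measurable_symmetrization[OF q]
        symmetrization_nonneg[OF q_nonneg] _ qS_ln_qS qS_ln_qS_div_p]
      lik p lik_inv p_inv q_ln_lik
    by simp
qed

lemma mutual_info_dens_summand_eq:
  fixes q :: "'a \<Rightarrow> real" and j :: "'g \<Rightarrow> 'a \<Rightarrow> real"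
  assumes j: "\<And>g x. j g x = q (T g x) / real (card A)"
    and q: "q \<in> borel_measurable M" and q_nonneg: "\<And>x. x \<in> space M \<Longrightarrow> 0 \<le> q x"
    and q_one: "(\<integral>x. q x \<partial>M) = 1"
    and g: "g \<in> A" and x: "x \<in> space M"
  shows "j g x * ln (j g x / ((\<integral>y. j g y \<partial>M) * (\<Sum>h\<in>A. j h x))) =
    (q (T g x) * ln (q (T g x)) - q (T g x) * ln (symmetrization q x)) / real (card A)"
proof -
  have "(\<integral>y. j g y \<partial>M) = 1 / real (card A)"
    using integral_comp_T[OF g q] q_one by (simp add: j)
  moreover have "(\<Sum>h\<in>A. j h x) = symmetrization q x"
    by (simp add: j symmetrization_def sum_divide_distrib)
  moreover have "0 \<le> q (T g x)"
    using q_nonneg measurable_space[OF measurable_T[OF g] x] .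
  ultimately show ?thesis
    using mult_ln_div_rescaled le_card_mult_symmetrization[of g x q, OF g x q_nonneg] card_family_pos
    by (simp only: j)
qed

lemma mutual_info_dens_eq_diff_entropy:
  fixes q :: "'a \<Rightarrow> real" and j :: "'g \<Rightarrow> 'a \<Rightarrow> real"
  assumes j: "\<And>g x. j g x = q (T g x) / real (card A)"
    and q: "q \<in> borel_measurable M" and q_nonneg: "\<And>x. x \<in> space M \<Longrightarrow> 0 \<le> q x"
    and q_one: "(\<integral>x. q x \<partial>M) = 1"
    and q_ln_q: "integrable M (\<lambda>x. q x * ln (q x))"
    and summands: "\<And>g. g \<in> A \<Longrightarrow>
      integrable M (\<lambda>x. j g x * ln (j g x / ((\<integral>y. j g y \<partial>M) * (\<Sum>h\<in>A. j h x))))"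
  shows "mutual_info_dens A M j = diff_entropy M (symmetrization q) - diff_entropy M q"
proof -
  define n where "n = real (card A)"
  define qS where "qS = symmetrization q"
  define F where "F g x = j g x * ln (j g x / ((\<integral>y. j g y \<partial>M) * (\<Sum>h\<in>A. j h x)))" for g x
  have n: "0 < n" unfolding n_def by (rule card_family_pos)
  have q_ln_q_meas: "(\<lambda>x. q x * ln (q x)) \<in> borel_measurable M" using q by measurable
  have F_eq: "F g x = (q (T g x) * ln (q (T g x)) - q (T g x) * ln (qS x)) / n"
    if "g \<in> A" and "x \<in> space M" for g x
    unfolding F_def n_def qS_def using j q q_nonneg q_one that by (rule mutual_info_dens_summand_eq)
  have entropy_g: "integrable M (\<lambda>x. q (T g x) * ln (q (T g x)))"
    "(\<integral>x. q (T g x) * ln (q (T g x)) \<partial>M) = (\<integral>x. q x * ln (q x) \<partial>M)" if g: "g \<in> A" for g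
    using integrable_comp_T_iff[OF g q_ln_q_meas] integral_comp_T[OF g q_ln_q_meas] q_ln_q by simp_all
  have cross_g: "integrable M (\<lambda>x. q (T g x) * ln (qS x))" if g: "g \<in> A" for g
  proof -
    have "integrable M (\<lambda>x. q (T g x) * ln (q (T g x)) - n * F g x)"
      using entropy_g[OF g] summands[OF g] by (simp add: F_def)
    moreover have "integrable M (\<lambda>x. q (T g x) * ln (qS x)) \<longleftrightarrow>
        integrable M (\<lambda>x. q (T g x) * ln (q (T g x)) - n * F g x)"
      using n by (intro Bochner_Integration.integrable_cong) (simp_all add: F_eq g)
    ultimately show ?thesis by simp
  qed
  have "mutual_info_dens A M j = (\<Sum>g\<in>A. integral\<^sup>L M (F g))"
    unfolding mutual_info_dens_def F_def ..
  also have "\<dots> = (\<Sum>g\<in>A. ((\<integral>x. q x * ln (q x) \<partial>M) - (\<integral>x. q (T g x) * ln (qS x) \<partial>M)) / n)"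
  proof (rule sum.cong[OF refl])
    fix g assume g: "g \<in> A"
    have "integral\<^sup>L M (F g) =
        (\<integral>x. (q (T g x) * ln (q (T g x)) - q (T g x) * ln (qS x)) / n \<partial>M)"
      by (rule Bochner_Integration.integral_cong) (simp_all add: F_eq g)
    then show "integral\<^sup>L M (F g) = ((\<integral>x. q x * ln (q x) \<partial>M) - (\<integral>x. q (T g x) * ln (qS x) \<partial>M)) / n"
      using entropy_g[OF g] cross_g[OF g] by simp
  qed
  also have "\<dots> = (\<integral>x. q x * ln (q x) \<partial>M) - (\<integral>x. (\<Sum>g\<in>A. q (T g x) * ln (qS x)) / n \<partial>M)"
    using cross_g n by (simp add: integral_sum sum_subtractf n_def diff_divide_distrib
        sum_divide_distrib[symmetric])
  also have "(\<lambda>x. (\<Sum>g\<in>A. q (T g x) * ln (qS x)) / n) = (\<lambda>x. qS x * ln (qS x))"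
    by (simp add: qS_def symmetrization_def n_def sum_distrib_right)
  finally show ?thesis
    unfolding diff_entropy_def qS_def by simp
qed

end

lemma finite_mlp_coords: "finite (mlp_coords d L)"
proof -
  have "mlp_coords d L \<subseteq>
      (\<lambda>(l, i, j). Wc l i j) ` (SIGMA l:{1..L}. SIGMA i:{..<d l}. {..<d (l - 1)}) \<union>
      (\<lambda>(l, i). Bc l i) ` (SIGMA l:{1..L}. {..<d l})"
    unfolding mlp_coords_def by (auto simp: image_iff)
  then show ?thesis by (rule finite_subset) simp
qed

lemma perm_group_permutes: "\<tau> \<in> perm_group d L \<Longrightarrow> \<tau> l permutes {..<d l}"
  unfolding perm_group_def by (cases "1 \<le> l \<and> l < L") (auto simp: permutes_id)

lemma perm_group_eq_id: "\<tau> \<in> perm_group d L \<Longrightarrow> L \<le> l \<Longrightarrow> \<tau> l = id"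
  unfolding perm_group_def by auto

lemma finite_perm_group: "finite (perm_group d L)"
proof -
  let ?r = "\<lambda>\<tau>. restrict \<tau> {..<L}"
  have "inj_on ?r (perm_group d L)"
  proof (rule inj_onI, rule ext)
    fix \<sigma> \<tau> l assume "\<sigma> \<in> perm_group d L" "\<tau> \<in> perm_group d L" "?r \<sigma> = ?r \<tau>"
    then show "\<sigma> l = \<tau> l"
      by (cases "l < L") (metis lessThan_iff restrict_apply', simp add: perm_group_eq_id)
  qed
  moreover have "?r ` perm_group d L \<subseteq> (\<Pi>\<^sub>E l\<in>{..<L}. {f. f permutes {..<d l}})"
    by (auto simp: perm_group_permutes)
  moreover have "finite (\<Pi>\<^sub>E l\<in>{..<L}. {f. f permutes {..<d l}})"
    by (simp add: finite_PiE finite_permutations)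
  ultimately show ?thesis
    by (meson finite_imageD finite_subset)
qed

lemma id_in_perm_group: "(\<lambda>_. id) \<in> perm_group d L"
  unfolding perm_group_def by simp

lemma perm_inv_in_perm_group: "\<tau> \<in> perm_group d L \<Longrightarrow> perm_inv \<tau> \<in> perm_group d L"
  unfolding perm_group_def perm_inv_def by (auto simp: permutes_inv)

lemma perm_inv_perm_inv:
  assumes "\<tau> \<in> perm_group d L"
  shows "perm_inv (perm_inv \<tau>) = \<tau>"
proof -
  have "bij (\<tau> l)" for l
    using perm_group_permutes[OF assms] by (rule permutes_bij)
  then show ?thesis unfolding perm_inv_def by (simp add: inv_inv_eq)
qed

lemma perm_group_component_less: "\<tau> \<in> perm_group d L \<Longrightarrow> i < d l \<Longrightarrow> \<tau> l i < d l"
  using perm_group_permutes permutes_in_image by fastforce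

definition coord_perm :: "(nat \<Rightarrow> nat \<Rightarrow> nat) \<Rightarrow> coord \<Rightarrow> coord" where
  "coord_perm \<tau> c = (case c of
     Wc l i j \<Rightarrow> Wc l (\<tau> l i) (\<tau> (l - 1) j)
   | Bc l i \<Rightarrow> Bc l (\<tau> l i))"

lemma act_eq_restrict_coord_perm: "act d L \<tau> \<omega> = (\<lambda>c\<in>mlp_coords d L. \<omega> (coord_perm \<tau> c))"
  unfolding act_def coord_perm_def by (auto split: coord.splits)

lemma coord_perm_in_mlp_coords:
  "\<tau> \<in> perm_group d L \<Longrightarrow> c \<in> mlp_coords d L \<Longrightarrow> coord_perm \<tau> c \<in> mlp_coords d L"
  unfolding coord_perm_def mlp_coords_def
  by (auto split: coord.splits intro: perm_group_component_less)

lemma coord_perm_perm_inv: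
  assumes "\<tau> \<in> perm_group d L"
  shows "coord_perm (perm_inv \<tau>) (coord_perm \<tau> c) = c"
proof -
  have "inj (\<tau> l)" for l
    using perm_group_permutes[OF assms] by (rule permutes_inj)
  then show ?thesis
    unfolding coord_perm_def perm_inv_def by (simp split: coord.splits)
qed

lemma bij_betw_coord_perm:
  assumes "\<tau> \<in> perm_group d L"
  shows "bij_betw (coord_perm \<tau>) (mlp_coords d L) (mlp_coords d L)"
proof (rule bij_betw_byWitness[where f' = "coord_perm (perm_inv \<tau>)"])
  show "\<forall>c\<in>mlp_coords d L. coord_perm (perm_inv \<tau>) (coord_perm \<tau> c) = c"
    using coord_perm_perm_inv[OF assms] by blast
  show "\<forall>c\<in>mlp_coords d L. coord_perm \<tau> (coord_perm (perm_inv \<tau>) c) = c"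
    using coord_perm_perm_inv[OF perm_inv_in_perm_group[OF assms]] perm_inv_perm_inv[OF assms]
    by simp
  show "coord_perm \<tau> ` mlp_coords d L \<subseteq> mlp_coords d L"
    and "coord_perm (perm_inv \<tau>) ` mlp_coords d L \<subseteq> mlp_coords d L"
    using coord_perm_in_mlp_coords assms perm_inv_in_perm_group by blast+
qed

lemma measurable_act: "\<tau> \<in> perm_group d L \<Longrightarrow> act d L \<tau> \<in> mlp_space d L \<rightarrow>\<^sub>M mlp_space d L"
  unfolding act_eq_restrict_coord_perm[abs_def] mlp_space_def
  by (intro measurable_restrict measurable_component_singleton) (auto intro: coord_perm_in_mlp_coords)

lemma distr_act: "\<tau> \<in> perm_group d L \<Longrightarrow> distr (mlp_space d L) (mlp_space d L) (act d L \<tau>) = mlp_space d L"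
  unfolding act_eq_restrict_coord_perm[abs_def] mlp_space_def
  by (rule distr_PiM_permute_coordinates[OF _ finite_mlp_coords bij_betw_coord_perm])
    (rule lborel.sigma_finite_measure_axioms)

lemma finite_measure_preserving_family_mlp:
  "finite_measure_preserving_family (mlp_space d L) (perm_group d L) (\<lambda>\<tau>. act d L (perm_inv \<tau>))"
  using finite_perm_group id_in_perm_group perm_inv_in_perm_group measurable_act distr_act
  by unfold_locales blast+

lemma G_invariant_act_perm_inv:
  "G_invariant d L h \<Longrightarrow> \<tau> \<in> perm_group d L \<Longrightarrow> \<omega> \<in> space (mlp_space d L) \<Longrightarrow>
    h (act d L (perm_inv \<tau>) \<omega>) = h \<omega>"
  unfolding G_invariant_def by (blast intro: perm_inv_in_perm_group)

theorem theorem4p1: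
  fixes d :: "nat \<Rightarrow> nat" and L :: nat
    and p q lik :: "(coord \<Rightarrow> real) \<Rightarrow> real"
  defines "M \<equiv> mlp_space d L"
    and "G \<equiv> perm_group d L"
    and "qG \<equiv> sym_density d L q"
  assumes L: "1 \<le> L"
    and p_meas: "p \<in> borel_measurable M" and p_nonneg: "\<forall>\<omega>\<in>space M. 0 \<le> p \<omega>"
    and p_int: "integrable M p" and p_one: "(\<integral>\<omega>. p \<omega> \<partial>M) = 1"
    and p_inv: "G_invariant d L p"
    and q_meas: "q \<in> borel_measurable M" and q_nonneg: "\<forall>\<omega>\<in>space M. 0 \<le> q \<omega>"
    and q_int: "integrable M q" and q_one: "(\<integral>\<omega>. q \<omega> \<partial>M) = 1"
    and lik_meas: "lik \<in> borel_measurable M" and lik_nonneg: "\<forall>\<omega>\<in>space M. 0 \<le> lik \<omega>"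
    and lik_inv: "G_invariant d L lik"
    and fin_supp: "AE \<omega> in M. 0 < q \<omega> \<longrightarrow> 0 < p \<omega> \<and> 0 < lik \<omega>"
    and fin1: "integrable M (\<lambda>\<omega>. q \<omega> * ln (lik \<omega>))"
    and fin2: "integrable M (\<lambda>\<omega>. qG \<omega> * ln (lik \<omega>))"
    and fin3: "integrable M (\<lambda>\<omega>. q \<omega> * ln (q \<omega> / p \<omega>))"
    and fin4: "integrable M (\<lambda>\<omega>. qG \<omega> * ln (qG \<omega> / p \<omega>))"
    and fin5: "integrable M (\<lambda>\<omega>. q \<omega> * ln (q \<omega>))"
    and fin6: "integrable M (\<lambda>\<omega>. qG \<omega> * ln (qG \<omega>))"
    and fin7: "\<forall>\<tau>\<in>G. integrable M (\<lambda>\<omega>. joint_density d L q \<tau> \<omega> *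
                 ln (joint_density d L q \<tau> \<omega> /
                     ((\<integral>\<omega>'. joint_density d L q \<tau> \<omega>' \<partial>M) *
                      (\<Sum>\<sigma>\<in>G. joint_density d L q \<sigma> \<omega>))))"
  shows "ELBO M lik p qG = ELBO M lik p q + diff_entropy M qG - diff_entropy M q \<and>
         ELBO M lik p q + diff_entropy M qG - diff_entropy M q =
           ELBO M lik p q + mutual_info_dens G M (joint_density d L q)"
proof -
  interpret G: finite_measure_preserving_family M G "\<lambda>\<tau>. act d L (perm_inv \<tau>)"
    unfolding M_def G_def by (rule finite_measure_preserving_family_mlp)
  have qG_eq: "qG = G.symmetrization q"
    by (simp add: fun_eq_iff qG_def sym_density_def G.symmetrization_def G_def[symmetric])
  have joint_eq: "joint_density d L q \<tau> \<omega> = q (act d L (perm_inv \<tau>) \<omega>) / real (card G)" for \<tau> \<omega>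
    by (simp add: G_def joint_density_def)
  have q_nonneg': "\<And>\<omega>. \<omega> \<in> space M \<Longrightarrow> 0 \<le> q \<omega>"
    using q_nonneg by blast
  have p_inv': "\<And>\<tau> \<omega>. \<tau> \<in> G \<Longrightarrow> \<omega> \<in> space M \<Longrightarrow> p (act d L (perm_inv \<tau>) \<omega>) = p \<omega>"
    and lik_inv': "\<And>\<tau> \<omega>. \<tau> \<in> G \<Longrightarrow> \<omega> \<in> space M \<Longrightarrow> lik (act d L (perm_inv \<tau>) \<omega>) = lik \<omega>"
    using G_invariant_act_perm_inv p_inv lik_inv unfolding M_def G_def by blast+
  have abs_cont: "AE \<omega> in M. 0 < q \<omega> \<longrightarrow> 0 < p \<omega>"
    using fin_supp by eventually_elim blast
  have "ELBO M lik p qG = ELBO M lik p q + diff_entropy M qG - diff_entropy M q"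
    unfolding qG_eq using lik_meas p_meas q_meas q_nonneg' lik_inv' p_inv' abs_cont fin1 fin5 fin3
      fin6[unfolded qG_eq] fin4[unfolded qG_eq]
    by (rule G.ELBO_symmetrization)
  moreover have "mutual_info_dens G M (joint_density d L q) = diff_entropy M qG - diff_entropy M q"
    unfolding qG_eq using joint_eq q_meas q_nonneg' q_one fin5 fin7
    by (intro G.mutual_info_dens_eq_diff_entropy) auto
  ultimately show ?thesis by simp
qed

end
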